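(* Let $\mathcal A=(S,R)$ be a finitary argumentation network ($S\neq\varnothing$, $R\subseteq S\times S$, each element has finitely many attackers), and let $\Delta_{\mathcal A}$ be the $\mathbf{CN}$-theory $$\Delta_{\mathcal A}=\{x\mid x\in S \text{ unattacked}\}\cup\{y\leftrightarrow \textstyle\bigwedge_{zRy}Nz\mid y\in S\}\cup\{z\to Ny\mid zRy\}\cup\{(\textstyle\bigwedge_{zRy}\neg z)\wedge(\bigvee_{zRy}\neg Nz)\to \neg y\wedge\neg Ny\mid y\in S\}.$$ Let $E=\{x\in S\mid \Delta_{\mathcal A}\vdash_{\mathbf{CN}}x\}$. Then $E$ is the grounded extension of $\mathcal A$.
   Context: The logic $\mathbf{CN}$: the elements of $S$ are basic atoms; atomic formulas are $q$ and $Nq$ for basic atoms $q$; formulas are built with classical connectives; $\Delta\vdash_{\mathbf{CN}}A$ iff $\Delta\cup\{Nq\to\neg q\}\vdash A$ in classical propositional logic (treating each $q$ and $Nq$ as distinct classical atoms). Empty conjunctions are $\top$, empty disjunctions $\bot$. A complete extension of $(S,R)$ is a conflict-free set $E\subseteq S$ (no $x,y\in E$ with $xRy$) which contains exactly those arguments it defends ($x$ is defended by $E$ if every attacker of $x$ is attacked by some element of $E$); equivalently, the set of arguments labelled in by a legitimate Caminada labelling. The grounded (ground) extension is the least complete extension with respect to inclusion. *)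

theory Defs
  imports Main
begin

definition attackers :: "('a \<times> 'a) set \<Rightarrow> 'a \<Rightarrow> 'a set" where
  "attackers R y = {z. (z, y) \<in> R}"

definition finitary_network :: "'a set \<Rightarrow> ('a \<times> 'a) set \<Rightarrow> bool" where
  "finitary_network S R \<longleftrightarrow> S \<noteq> {} \<and> R \<subseteq> S \<times> S \<and> (\<forall>y\<in>S. finite (attackers R y))"

definition conflict_free :: "('a \<times> 'a) set \<Rightarrow> 'a set \<Rightarrow> bool" where
  "conflict_free R E \<longleftrightarrow> (\<forall>x\<in>E. \<forall>y\<in>E. (x, y) \<notin> R)"

definition defends :: "('a \<times> 'a) set \<Rightarrow> 'a set \<Rightarrow> 'a \<Rightarrow> bool" where
  "defends R E x \<longleftrightarrow> (\<forall>y. (y, x) \<in> R \<longrightarrow> (\<exists>z\<in>E. (z, y) \<in> R))"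

definition complete_extension :: "'a set \<Rightarrow> ('a \<times> 'a) set \<Rightarrow> 'a set \<Rightarrow> bool" where
  "complete_extension S R E \<longleftrightarrow>
     E \<subseteq> S \<and> conflict_free R E \<and> E = {x \<in> S. defends R E x}"

definition grounded_extension :: "'a set \<Rightarrow> ('a \<times> 'a) set \<Rightarrow> 'a set \<Rightarrow> bool" where
  "grounded_extension S R E \<longleftrightarrow>
     complete_extension S R E \<and> (\<forall>E'. complete_extension S R E' \<longrightarrow> E \<subseteq> E')"

text \<open>Atomic formulas are q (At q) and Nq (NAt q) for basic atoms q.\<close>
datatype 'a fml =
    At 'a | NAt 'a | FTop | FBot | FNeg "'a fml"
  | FAnd "'a fml" "'a fml" | FOr "'a fml" "'a fml" | FImp "'a fml" "'a fml"

definition FIff :: "'a fml \<Rightarrow> 'a fml \<Rightarrow> 'a fml" where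
  "FIff A B = FAnd (FImp A B) (FImp B A)"

fun BigAnd :: "'a fml list \<Rightarrow> 'a fml" where
  "BigAnd [] = FTop"
| "BigAnd (A # As) = FAnd A (BigAnd As)"

fun BigOr :: "'a fml list \<Rightarrow> 'a fml" where
  "BigOr [] = FBot"
| "BigOr (A # As) = FOr A (BigOr As)"

text \<open>Classical semantics: v interprets the atoms q, w the atoms Nq (as distinct classical atoms).\<close>
fun eval :: "('a \<Rightarrow> bool) \<Rightarrow> ('a \<Rightarrow> bool) \<Rightarrow> 'a fml \<Rightarrow> bool" where
  "eval v w (At q) = v q"
| "eval v w (NAt q) = w q"
| "eval v w FTop = True"
| "eval v w FBot = False"
| "eval v w (FNeg A) = (\<not> eval v w A)"
| "eval v w (FAnd A B) = (eval v w A \<and> eval v w B)"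
| "eval v w (FOr A B) = (eval v w A \<or> eval v w B)"
| "eval v w (FImp A B) = (eval v w A \<longrightarrow> eval v w B)"

text \<open>Classical consequence (semantic; equal to derivability by completeness/compactness).
  Delta |-_CN A iff Delta \<union> {Nq \<rightarrow> \<not>q | q basic atom} classically entails A.\<close>
definition CN_entails :: "'a set \<Rightarrow> 'a fml set \<Rightarrow> 'a fml \<Rightarrow> bool" where
  "CN_entails S \<Delta> A \<longleftrightarrow>
     (\<forall>v w. (\<forall>q\<in>S. eval v w (FImp (NAt q) (FNeg (At q)))) \<longrightarrow>
            (\<forall>B\<in>\<Delta>. eval v w B) \<longrightarrow> eval v w A)"

definition att_list :: "('a \<times> 'a) set \<Rightarrow> 'a \<Rightarrow> 'a list" where
  "att_list R y = (SOME xs. set xs = attackers R y)"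

definition Delta :: "'a set \<Rightarrow> ('a \<times> 'a) set \<Rightarrow> 'a fml set" where
  "Delta S R =
     {At x | x. x \<in> S \<and> attackers R x = {}}
   \<union> {FIff (At y) (BigAnd (map NAt (att_list R y))) | y. y \<in> S}
   \<union> {FImp (At z) (NAt y) | z y. (z, y) \<in> R}
   \<union> {FImp (FAnd (BigAnd (map (\<lambda>z. FNeg (At z)) (att_list R y)))
                 (BigOr (map (\<lambda>z. FNeg (NAt z)) (att_list R y))))
           (FAnd (FNeg (At y)) (FNeg (NAt y))) | y. y \<in> S}"

end

theory Submission
  imports Defs
begin

text \<open>
  The axioms of \<open>\<Delta>\<close>, read semantically, say that the atoms \<open>q\<close> true in a CN-model form a
  complete extension \<open>E\<close> and that \<open>Nq\<close> holds exactly when \<open>q\<close> is attacked by \<open>E\<close>; conversely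
  every complete extension yields such a model. Hence \<open>\<Delta> \<turnstile> x\<close> iff \<open>x\<close> lies in every
  complete extension, i.e. in the least one. The least complete extension exists for every
  network: it is the least fixed point of Dung's characteristic function.
\<close>

lemma eval_BigAnd: "eval v w (BigAnd As) \<longleftrightarrow> (\<forall>A\<in>set As. eval v w A)"
  by (induction As) auto

lemma eval_BigOr: "eval v w (BigOr As) \<longleftrightarrow> (\<exists>A\<in>set As. eval v w A)"
  by (induction As) auto

lemma set_att_list: "finite (attackers R y) \<Longrightarrow> set (att_list R y) = attackers R y"
  unfolding att_list_def by (rule someI_ex) (rule finite_list)

definition characteristic :: "'a set \<Rightarrow> ('a \<times> 'a) set \<Rightarrow> 'a set \<Rightarrow> 'a set" where
  "characteristic S R X = {x \<in> S. defends R X x}"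

lemma mono_characteristic: "mono (characteristic S R)"
  unfolding mono_def characteristic_def defends_def by blast

lemma complete_extension_iff_fixpoint:
  "complete_extension S R E \<longleftrightarrow> conflict_free R E \<and> characteristic S R E = E"
  unfolding complete_extension_def characteristic_def by blast

lemma conflict_free_lfp_characteristic: "conflict_free R (lfp (characteristic S R))"
proof -
  let ?G = "lfp (characteristic S R)"
  \<comment> \<open>Fixpoint induction needs a property of single arguments: being neither attacked by
      nor attacking \<open>?G\<close>.\<close>
  let ?P = "{x. \<forall>y\<in>?G. (x, y) \<notin> R \<and> (y, x) \<notin> R}"
  have "characteristic S R ?G = ?G"
    by (rule lfp_fixpoint[OF mono_characteristic])
  then have G_defends: "y \<in> ?G \<Longrightarrow> defends R ?G y" for y
    unfolding characteristic_def by blast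
  have "characteristic S R (?G \<inter> ?P) \<subseteq> ?P"
  proof
    fix a assume "a \<in> characteristic S R (?G \<inter> ?P)"
    then have a_defended: "defends R (?G \<inter> ?P) a" by (simp add: characteristic_def)
    have unattacked: "(b, a) \<notin> R" if "b \<in> ?G" for b
      using a_defended that unfolding defends_def by blast
    moreover have "(a, b) \<notin> R" if "b \<in> ?G" for b
      using G_defends[OF that] unattacked unfolding defends_def by blast
    ultimately show "a \<in> ?P" by blast
  qed
  then have "?G \<subseteq> ?P"
    by (rule lfp_induct[OF mono_characteristic])
  then show ?thesis unfolding conflict_free_def by blast
qed

lemma grounded_extension_lfp: "grounded_extension S R (lfp (characteristic S R))"
  unfolding grounded_extension_def complete_extension_iff_fixpoint
  using conflict_free_lfp_characteristic lfp_fixpoint[OF mono_characteristic]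
  by (metis lfp_lowerbound order_refl)

lemma grounded_extension_eq_Inter_complete:
  assumes "grounded_extension S R G"
  shows "G = {x \<in> S. \<forall>E. complete_extension S R E \<longrightarrow> x \<in> E}"
  using assms unfolding grounded_extension_def complete_extension_def by blast

lemma eval_Delta_iff:
  assumes "\<And>y. y \<in> S \<Longrightarrow> finite (attackers R y)"
  shows "(\<forall>B\<in>Delta S R. eval v w B) \<longleftrightarrow>
    (\<forall>x\<in>S. attackers R x = {} \<longrightarrow> v x) \<and>
    (\<forall>y\<in>S. v y \<longleftrightarrow> (\<forall>z\<in>attackers R y. w z)) \<and>
    (\<forall>(z, y)\<in>R. v z \<longrightarrow> w y) \<and>
    (\<forall>y\<in>S. (\<forall>z\<in>attackers R y. \<not> v z) \<and> (\<exists>z\<in>attackers R y. \<not> w z) \<longrightarrow> \<not> v y \<and> \<not> w y)"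
  (is "_ \<longleftrightarrow> ?semantics")
proof -
  have "(\<forall>B\<in>Delta S R. eval v w B) \<longleftrightarrow>
    (\<forall>x\<in>S. attackers R x = {} \<longrightarrow> eval v w (At x)) \<and>
    (\<forall>y\<in>S. eval v w (FIff (At y) (BigAnd (map NAt (att_list R y))))) \<and>
    (\<forall>(z, y)\<in>R. eval v w (FImp (At z) (NAt y))) \<and>
    (\<forall>y\<in>S. eval v w (FImp (FAnd (BigAnd (map (\<lambda>z. FNeg (At z)) (att_list R y)))
                 (BigOr (map (\<lambda>z. FNeg (NAt z)) (att_list R y))))
           (FAnd (FNeg (At y)) (FNeg (NAt y)))))"
    unfolding Delta_def ball_Un conj_assoc
    by (intro conj_cong refl) (auto simp del: eval.simps)
  also have "\<dots> \<longleftrightarrow> ?semantics"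
    using assms by (simp add: set_att_list FIff_def eval_BigAnd eval_BigOr) blast
  finally show ?thesis .
qed

lemma complete_extension_CN_model:
  assumes network: "finitary_network S R" and E: "complete_extension S R E"
  defines "v \<equiv> \<lambda>x. x \<in> E" and "w \<equiv> \<lambda>y. \<exists>z\<in>E. (z, y) \<in> R"
  shows "\<forall>q\<in>S. eval v w (FImp (NAt q) (FNeg (At q)))" and "\<forall>B\<in>Delta S R. eval v w B"
proof -
  have E_fix: "E = {x \<in> S. defends R E x}" and "conflict_free R E"
    using E by (auto simp: complete_extension_def)
  then show "\<forall>q\<in>S. eval v w (FImp (NAt q) (FNeg (At q)))"
    by (auto simp: v_def w_def conflict_free_def)
  have finite_attackers: "\<And>y. y \<in> S \<Longrightarrow> finite (attackers R y)"
    using network by (simp add: finitary_network_def)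
  have "\<forall>y\<in>S. v y \<longleftrightarrow> (\<forall>z\<in>attackers R y. w z)"
    using E_fix by (auto simp: v_def w_def defends_def attackers_def)
  then show "\<forall>B\<in>Delta S R. eval v w B"
    using E_fix by (simp add: eval_Delta_iff[OF finite_attackers]) (auto simp: v_def w_def attackers_def)
qed

lemma CN_model_complete_extension:
  assumes network: "finitary_network S R"
    and consistent: "\<forall>q\<in>S. eval v w (FImp (NAt q) (FNeg (At q)))"
    and model: "\<forall>B\<in>Delta S R. eval v w B"
  shows "complete_extension S R {x \<in> S. v x}"
proof -
  have R_S: "R \<subseteq> S \<times> S" and finite_attackers: "\<And>y. y \<in> S \<Longrightarrow> finite (attackers R y)"
    using network by (auto simp: finitary_network_def)
  have semantics:
    "(\<forall>y\<in>S. v y \<longleftrightarrow> (\<forall>z\<in>attackers R y. w z)) \<and> (\<forall>(z, y)\<in>R. v z \<longrightarrow> w y) \<and>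
     (\<forall>y\<in>S. (\<forall>z\<in>attackers R y. \<not> v z) \<and> (\<exists>z\<in>attackers R y. \<not> w z) \<longrightarrow> \<not> w y)"
    using model by (simp add: eval_Delta_iff[OF finite_attackers])
  then have v_iff: "\<And>y. y \<in> S \<Longrightarrow> v y \<longleftrightarrow> (\<forall>z\<in>attackers R y. w z)"
    and attack: "\<And>z y. (z, y) \<in> R \<Longrightarrow> v z \<Longrightarrow> w y"
    and undecided: "\<And>y. y \<in> S \<Longrightarrow> \<forall>z\<in>attackers R y. \<not> v z \<Longrightarrow>
                     \<exists>z\<in>attackers R y. \<not> w z \<Longrightarrow> \<not> w y"
    by blast+
  have not_both: "\<And>q. q \<in> S \<Longrightarrow> w q \<Longrightarrow> \<not> v q"
    using consistent by simp
  \<comment> \<open>If \<open>w y\<close> held with no attacker true, either all attackers satisfy \<open>w\<close> (then \<open>v y\<close>,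
      contradicting consistency) or some does not (then \<open>\<not> w y\<close> by the last axiom group).\<close>
  have w_iff: "w y \<longleftrightarrow> (\<exists>z\<in>attackers R y. v z)" if "y \<in> S" for y
    using v_iff[OF that] undecided[OF that] not_both[OF that] attack
    by (auto simp: attackers_def)
  let ?E = "{x \<in> S. v x}"
  have "conflict_free R ?E"
    unfolding conflict_free_def using attack not_both by blast
  moreover have "v x \<longleftrightarrow> defends R ?E x" if "x \<in> S" for x
  proof -
    have "v x \<longleftrightarrow> (\<forall>y. (y, x) \<in> R \<longrightarrow> w y)"
      using v_iff[OF that] by (simp add: attackers_def)
    also have "\<dots> \<longleftrightarrow> (\<forall>y. (y, x) \<in> R \<longrightarrow> (\<exists>z. (z, y) \<in> R \<and> v z))"
    proof -
      have "w y \<longleftrightarrow> (\<exists>z. (z, y) \<in> R \<and> v z)" if "(y, x) \<in> R" for y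
        using w_iff[of y] that R_S by (auto simp: attackers_def)
      then show ?thesis by blast
    qed
    also have "\<dots> \<longleftrightarrow> defends R ?E x"
      using R_S unfolding defends_def by blast
    finally show ?thesis .
  qed
  ultimately show ?thesis
    unfolding complete_extension_def by blast
qed

lemma CN_entails_At_iff:
  assumes "finitary_network S R" and "x \<in> S"
  shows "CN_entails S (Delta S R) (At x) \<longleftrightarrow> (\<forall>E. complete_extension S R E \<longrightarrow> x \<in> E)"
proof
  assume entails: "CN_entails S (Delta S R) (At x)"
  show "\<forall>E. complete_extension S R E \<longrightarrow> x \<in> E"
  proof (intro allI impI)
    fix E assume "complete_extension S R E"
    from complete_extension_CN_model[OF assms(1) this]
    show "x \<in> E"
      using entails[unfolded CN_entails_def, rule_format, of "\<lambda>x. x \<in> E" "\<lambda>y. \<exists>z\<in>E. (z, y) \<in> R"]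
      by simp
  qed
next
  assume in_all: "\<forall>E. complete_extension S R E \<longrightarrow> x \<in> E"
  show "CN_entails S (Delta S R) (At x)"
    unfolding CN_entails_def
  proof (intro allI impI)
    fix v w
    assume "\<forall>q\<in>S. eval v w (FImp (NAt q) (FNeg (At q)))" and "\<forall>B\<in>Delta S R. eval v w B"
    from CN_model_complete_extension[OF assms(1) this] in_all \<open>x \<in> S\<close>
    show "eval v w (At x)" by auto
  qed
qed

theorem theorem8:
  fixes S :: "'a set" and R :: "('a \<times> 'a) set"
  assumes "finitary_network S R"
  shows "grounded_extension S R {x \<in> S. CN_entails S (Delta S R) (At x)}"
proof -
  have "{x \<in> S. CN_entails S (Delta S R) (At x)} =
        {x \<in> S. \<forall>E. complete_extension S R E \<longrightarrow> x \<in> E}"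
    using CN_entails_At_iff[OF assms] by blast
  also have "\<dots> = lfp (characteristic S R)"
    by (rule grounded_extension_eq_Inter_complete[OF grounded_extension_lfp, symmetric])
  finally show ?thesis
    using grounded_extension_lfp by simp
qed

end
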